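(* Let $F$ be a field, $P\in F[t]$ a monic irreducible polynomial of degree $d\ge1$, and $G_1,G_2,G_3\in F[t]$ polynomials not divisible by $P$. Then $$\{x_P(G_1,G_2)\}_2-\{x_P(G_1G_3,G_2)\}_2-\{x_P(G_1,G_3)\}_2+\{x_P(G_1G_2,G_3)\}_2\in B_{d-1}(F(t)).$$
   Context: For a field $K$, $K^*$ means $K^*\otimes\mathbb{Q}$, exterior powers over $\mathbb{Q}$. $B_2(K)=\mathbb{Q}[\mathbb{P}^1(K)]/R_2(K)$, with basis symbols $\{x\}_2$ ($x\in\mathbb{P}^1(K)$) modulo the span of $\{0\}_2,\{\infty\}_2$ and $\sum_{i=1}^5(-1)^i\{r(x_1,\dots,\hat x_i,\dots,x_5)\}_2$ (pairwise distinct $x_j$, $r(a,b,c,d)=\frac{(a-b)(c-d)}{(c-b)(a-d)}$); $\delta_2(\{x\}_2)=x\wedge(1-x)\in\bigwedge^2K^*$. $V_e\subset F(t)^*\otimes\mathbb{Q}$ is the span of nonzero polynomials of degree $\le e$; $B_e(F(t))=\{y\in B_2(F(t)):\delta_2(y)\in\bigwedge^2V_e\}$. For a polynomial $G$ not divisible by $P$, let $\overline G$ be its remainder modulo $P$ (degree $<d$). For $G,H$ not divisible by $P$, $x_P(G,H):=\overline G\,\overline H/\overline{GH}\in F(t)^*$. *)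

theory Defs
  imports "HOL-Computational_Algebra.Polynomial" "HOL-Computational_Algebra.Fraction_Field"
          "HOL-Computational_Algebra.Polynomial_Factorial"
begin

type_synonym 'a ratfun = "'a poly fract"

inductive_set qspan :: "('b \<Rightarrow> rat) set \<Rightarrow> ('b \<Rightarrow> rat) set" for S where
  zero: "(\<lambda>_. 0) \<in> qspan S"
| base: "v \<in> S \<Longrightarrow> v \<in> qspan S"
| add: "v \<in> qspan S \<Longrightarrow> w \<in> qspan S \<Longrightarrow> (\<lambda>z. v z + w z) \<in> qspan S"
| scale: "v \<in> qspan S \<Longrightarrow> (\<lambda>z. c * v z) \<in> qspan S"

definition vadd :: "('b \<Rightarrow> rat) \<Rightarrow> ('b \<Rightarrow> rat) \<Rightarrow> 'b \<Rightarrow> rat" where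
  "vadd v w = (\<lambda>z. v z + w z)"
definition vsub :: "('b \<Rightarrow> rat) \<Rightarrow> ('b \<Rightarrow> rat) \<Rightarrow> 'b \<Rightarrow> rat" where
  "vsub v w = (\<lambda>z. v z - w z)"

text \<open>Free Q-vector space on pairs of elements of K: formal generator a \<and> b.\<close>
definition wedge :: "'k \<Rightarrow> 'k \<Rightarrow> ('k \<times> 'k \<Rightarrow> rat)" where
  "wedge a b = (\<lambda>z. if z = (a, b) then 1 else 0)"

text \<open>Relations whose quotient of the free Q-vector space on K^* x K^* is
  (\<And>^2_Z K^*) \<otimes> Q = \<And>^2_Q (K^* \<otimes> Q).\<close>
definition wedge_rels :: "('k::field \<times> 'k \<Rightarrow> rat) set" where
  "wedge_rels =
     {vsub (vsub (wedge (a * b) c) (wedge a c)) (wedge b c) | a b c. a \<noteq> 0 \<and> b \<noteq> 0 \<and> c \<noteq> 0}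
   \<union> {vsub (vsub (wedge a (b * c)) (wedge a b)) (wedge a c) | a b c. a \<noteq> 0 \<and> b \<noteq> 0 \<and> c \<noteq> 0}
   \<union> {wedge a a | a. a \<noteq> 0}"

text \<open>A formal combination \<omega> of wedges of nonzero elements represents an element of
  \<And>^2 V_e iff it lies in the span of the relations together with the wedges p \<and> q
  of nonzero polynomials of degree \<le> e.\<close>
definition in_wedge2_V :: "nat \<Rightarrow> ('a::field ratfun \<times> 'a ratfun \<Rightarrow> rat) \<Rightarrow> bool" where
  "in_wedge2_V e \<omega> \<longleftrightarrow>
     \<omega> \<in> qspan (wedge_rels \<union>
        {wedge (to_fract p) (to_fract q) | p q. p \<noteq> 0 \<and> q \<noteq> 0 \<and> degree p \<le> e \<and> degree q \<le> e})"

text \<open>Elements of Q[P^1(K)]: finitely supported functions on K option (None = \<infinity>).\<close>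
definition symb :: "'k \<Rightarrow> ('k option \<Rightarrow> rat)" where
  "symb x = (\<lambda>z. if z = Some x then 1 else 0)"

definition delta2_symb :: "'k::field option \<Rightarrow> ('k \<times> 'k \<Rightarrow> rat)" where
  "delta2_symb x = (case x of None \<Rightarrow> (\<lambda>_. 0)
      | Some y \<Rightarrow> (if y = 0 \<or> y = 1 then (\<lambda>_. 0) else wedge y (1 - y)))"

definition delta2 :: "('k::field option \<Rightarrow> rat) \<Rightarrow> ('k \<times> 'k \<Rightarrow> rat)" where
  "delta2 Y = (\<lambda>z. \<Sum>x\<in>{x. Y x \<noteq> 0}. Y x * delta2_symb x z)"

text \<open>Y (a representative in Q[P^1(F(t))]) has class in B_e(F(t)).\<close>
definition in_B :: "nat \<Rightarrow> ('a::field ratfun option \<Rightarrow> rat) \<Rightarrow> bool" where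
  "in_B e Y \<longleftrightarrow> finite {x. Y x \<noteq> 0} \<and> in_wedge2_V e (delta2 Y)"

definition xP :: "'a::field poly \<Rightarrow> 'a poly \<Rightarrow> 'a poly \<Rightarrow> 'a ratfun" where
  "xP P G H = to_fract (G mod P) * to_fract (H mod P) / to_fract ((G * H) mod P)"

end

theory Submission
  imports Defs "HOL-Library.Function_Algebras"
begin

text \<open>Write \<open>g, h, r\<close> for the remainders of \<open>G, H, GH\<close> modulo \<open>P\<close>, so that
  \<open>gh = r - qP\<close> with \<open>deg q < d = deg P\<close>. Then \<open>x = x\<^sub>P(G,H) = gh/r\<close> and \<open>1 - x = qP/r\<close>, and
  bilinearity gives \<open>x \<and> (1 - x) \<equiv> (g \<and> P) + (h \<and> P) - (r \<and> P)\<close> modulo \<open>\<And>\<^sup>2 V\<^sub>d\<^sub>-\<^sub>1\<close>, because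
  \<open>g, h, r, q\<close> all have degree below \<open>d\<close>. So \<open>\<delta>\<^sub>2{x\<^sub>P(G,H)}\<close> is congruent to the coboundary
  \<open>c(G) + c(H) - c(GH)\<close> of \<open>c(G) = (G mod P) \<and> P\<close>, and the coboundaries cancel in the
  four-term combination.\<close>

lemma qspan_add: "v \<in> qspan S \<Longrightarrow> w \<in> qspan S \<Longrightarrow> v + w \<in> qspan S"
  using qspan.add[of v S w] by (simp add: plus_fun_def)

lemma qspan_uminus: "v \<in> qspan S \<Longrightarrow> - v \<in> qspan S"
  using qspan.scale[of v S "-1"] by (simp add: fun_Compl_def)

lemma qspan_diff: "v \<in> qspan S \<Longrightarrow> w \<in> qspan S \<Longrightarrow> v - w \<in> qspan S"
  unfolding diff_conv_add_uminus by (intro qspan_add qspan_uminus)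

lemma vadd_eq_plus: "vadd v w = v + w"
  by (simp add: vadd_def fun_eq_iff)

lemma vsub_eq_minus: "vsub v w = v - w"
  by (simp add: vsub_def fun_eq_iff)

lemma wedge_mult_left_in_qspan:
  fixes a b c :: "'k::field"
  assumes "wedge_rels \<subseteq> S" "a \<noteq> 0" "b \<noteq> 0" "c \<noteq> 0"
  shows "wedge (a * b) c - wedge a c - wedge b c \<in> qspan S"
proof -
  have "vsub (vsub (wedge (a * b) c) (wedge a c)) (wedge b c) \<in> wedge_rels"
    using assms(2-4) unfolding wedge_rels_def by blast
  with assms(1) show ?thesis
    by (auto intro: qspan.base simp: vsub_eq_minus)
qed

lemma wedge_mult_right_in_qspan:
  fixes a b c :: "'k::field"
  assumes "wedge_rels \<subseteq> S" "a \<noteq> 0" "b \<noteq> 0" "c \<noteq> 0"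
  shows "wedge a (b * c) - wedge a b - wedge a c \<in> qspan S"
proof -
  have "vsub (vsub (wedge a (b * c)) (wedge a b)) (wedge a c) \<in> wedge_rels"
    using assms(2-4) unfolding wedge_rels_def by blast
  with assms(1) show ?thesis
    by (auto intro: qspan.base simp: vsub_eq_minus)
qed

lemma wedge_mult_div_left_in_qspan:
  fixes a b c y :: "'k::field"
  assumes rels: "wedge_rels \<subseteq> S" and "a \<noteq> 0" "b \<noteq> 0" "c \<noteq> 0" "y \<noteq> 0"
  shows "wedge (a * b / c) y - (wedge a y + wedge b y - wedge c y) \<in> qspan S"
proof -
  have "a * b / c \<noteq> 0" "a * b / c * c = a * b"
    using assms by auto
  then have "wedge (a * b) y - wedge (a * b / c) y - wedge c y \<in> qspan S"
    using wedge_mult_left_in_qspan[OF rels, of "a * b / c" c y] assms by simp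
  from qspan_diff[OF wedge_mult_left_in_qspan[OF rels, of a b y] this] assms
  show ?thesis
    by (simp add: algebra_simps)
qed

lemma wedge_mult_div_right_in_qspan:
  fixes a b c y :: "'k::field"
  assumes rels: "wedge_rels \<subseteq> S" and "a \<noteq> 0" "b \<noteq> 0" "c \<noteq> 0" "y \<noteq> 0"
  shows "wedge y (a * b / c) - (wedge y a + wedge y b - wedge y c) \<in> qspan S"
proof -
  have "a * b / c \<noteq> 0" "a * b / c * c = a * b"
    using assms by auto
  then have "wedge y (a * b) - wedge y (a * b / c) - wedge y c \<in> qspan S"
    using wedge_mult_right_in_qspan[OF rels, of y "a * b / c" c] assms by simp
  from qspan_diff[OF wedge_mult_right_in_qspan[OF rels, of y a b] this] assms
  show ?thesis
    by (simp add: algebra_simps)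
qed

lemma wedge_ratio_in_qspan:
  fixes a b r q p :: "'k::field"
  assumes rels: "wedge_rels \<subseteq> S"
    and V: "\<And>u v. u \<in> V \<Longrightarrow> v \<in> V \<Longrightarrow> wedge u v \<in> qspan S"
    and "0 \<notin> V" "a \<in> V" "b \<in> V" "r \<in> V" "q \<in> V" "p \<noteq> 0"
  shows "wedge (a * b / r) (q * p / r) - (wedge a p + wedge b p - wedge r p) \<in> qspan S"
proof -
  have nz: "a \<noteq> 0" "b \<noteq> 0" "r \<noteq> 0" "q \<noteq> 0" "q * p / r \<noteq> 0"
    using assms(3-8) by auto
  let ?y = "q * p / r"
  have "wedge (a * b / r) ?y - (wedge a ?y + wedge b ?y - wedge r ?y)
      + (wedge a ?y - (wedge a q + wedge a p - wedge a r))
      + (wedge b ?y - (wedge b q + wedge b p - wedge b r))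
      - (wedge r ?y - (wedge r q + wedge r p - wedge r r))
      + (wedge a q - wedge a r + wedge b q - wedge b r - wedge r q + wedge r r) \<in> qspan S"
    using nz assms(4-8)
    by (intro qspan_add qspan_diff wedge_mult_div_left_in_qspan wedge_mult_div_right_in_qspan
        rels V)
  then show ?thesis
    by (simp add: algebra_simps)
qed

definition wedge2_V_gens :: "nat \<Rightarrow> ('a::field ratfun \<times> 'a ratfun \<Rightarrow> rat) set" where
  "wedge2_V_gens e =
     {wedge (to_fract p) (to_fract q) | p q. p \<noteq> 0 \<and> q \<noteq> 0 \<and> degree p \<le> e \<and> degree q \<le> e}"

lemma in_wedge2_V_iff: "in_wedge2_V e \<omega> \<longleftrightarrow> \<omega> \<in> qspan (wedge_rels \<union> wedge2_V_gens e)"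
  by (simp add: in_wedge2_V_def wedge2_V_gens_def)

lemma wedge_to_fract_in_wedge2_V:
  fixes p q :: "'a::field poly"
  assumes "p \<noteq> 0" "q \<noteq> 0" "degree p \<le> e" "degree q \<le> e"
  shows "wedge (to_fract p) (to_fract q) \<in> qspan (wedge_rels \<union> wedge2_V_gens e)"
  using assms unfolding wedge2_V_gens_def by (intro qspan.base) blast

definition residue_wedge :: "'a::field poly \<Rightarrow> 'a poly \<Rightarrow> 'a ratfun \<times> 'a ratfun \<Rightarrow> rat" where
  "residue_wedge P G = wedge (to_fract (G mod P)) (to_fract P)"

lemma degree_mult_div_le:
  fixes P g h :: "'a::field poly"
  assumes "degree g < degree P" "degree h < degree P"
  shows "degree ((g * h) div P) \<le> degree P - 1"
proof (cases "(g * h) div P = 0")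
  case False
  have "P \<noteq> 0"
    using assms by auto
  have "degree ((g * h) div P) + degree P = degree ((g * h) div P * P)"
    using False \<open>P \<noteq> 0\<close> by (simp add: degree_mult_eq)
  also have "(g * h) div P * P = g * h - (g * h) mod P"
    by (simp add: minus_mod_eq_div_mult)
  also have "degree \<dots> \<le> max (degree (g * h)) (degree ((g * h) mod P))"
    by (rule degree_diff_le_max)
  also have "\<dots> \<le> 2 * degree P - 2"
    using assms degree_mult_le[of g h] degree_mod_less'[OF \<open>P \<noteq> 0\<close>, of "g * h"]
    by (cases "(g * h) mod P = 0") auto
  finally show ?thesis
    by simp
qed simp

lemma delta2_symb_xP_in_wedge2_V:
  fixes P G H :: "'a::field poly"
  assumes irr: "irreducible P" and "\<not> P dvd G" "\<not> P dvd H"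
  shows "delta2_symb (Some (xP P G H))
           - (residue_wedge P G + residue_wedge P H - residue_wedge P (G * H))
         \<in> qspan (wedge_rels \<union> wedge2_V_gens (degree P - 1))" (is "_ \<in> qspan ?S")
proof -
  define g h r where "g = G mod P" and "h = H mod P" and "r = (G * H) mod P"
  define q where "q = - ((g * h) div P)"
  have "P \<noteq> 0"
    using irr by auto
  have "\<not> P dvd G * H"
    using field_poly_irreducible_imp_prime[OF irr] assms(2,3) prime_elem_dvd_mult_iff by blast
  then have nz: "g \<noteq> 0" "h \<noteq> 0" "r \<noteq> 0"
    using assms(2,3) by (simp_all add: g_def h_def r_def mod_eq_0_iff_dvd)
  then have deg: "degree g < degree P" "degree h < degree P" "degree r < degree P"
    using degree_mod_less'[OF \<open>P \<noteq> 0\<close>] by (auto simp: g_def h_def r_def)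
  have "r = (g * h) mod P"
    by (simp add: g_def h_def r_def mod_mult_eq)
  then have "g * h = (g * h) div P * P + r"
    by simp
  then have rgh: "to_fract r - to_fract g * to_fract h = to_fract q * to_fract P"
    unfolding q_def
    by (metis add_diff_cancel_right' minus_diff_eq mult_minus_left to_fract_diff to_fract_mult)
  have x: "xP P G H = to_fract g * to_fract h / to_fract r"
    by (simp add: xP_def g_def h_def r_def)
  have rels: "wedge_rels \<subseteq> ?S"
    by blast
  show ?thesis
  proof (cases "q = 0")
    case True
    then have "to_fract r = to_fract g * to_fract h"
      using rgh by simp
    then have "xP P G H = 1" and "delta2_symb (Some (xP P G H)) = 0"
      using nz by (simp_all add: x delta2_symb_def zero_fun_def)
    with \<open>to_fract r = _\<close> show ?thesis
      using nz wedge_mult_left_in_qspan[OF rels, of "to_fract g" "to_fract h" "to_fract P"] \<open>P \<noteq> 0\<close>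
      by (simp add: residue_wedge_def algebra_simps flip: g_def h_def r_def)
  next
    case False
    define V where "V = {to_fract p | p :: 'a poly. p \<noteq> 0 \<and> degree p \<le> degree P - 1}"
    have "degree q \<le> degree P - 1"
      using degree_mult_div_le[OF deg(1,2)] by (simp add: q_def)
    then have inV: "to_fract g \<in> V" "to_fract h \<in> V" "to_fract r \<in> V" "to_fract q \<in> V"
      using nz deg False unfolding V_def by fastforce+
    have "1 - xP P G H = (to_fract r - to_fract g * to_fract h) / to_fract r"
      using nz by (simp add: x diff_divide_distrib)
    then have "1 - xP P G H = to_fract q * to_fract P / to_fract r"
      by (simp only: rgh)
    moreover have "xP P G H \<noteq> 0" "xP P G H \<noteq> 1"
      using calculation nz False \<open>P \<noteq> 0\<close> by (auto simp: x)
    ultimately have "delta2_symb (Some (xP P G H))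
        = wedge (to_fract g * to_fract h / to_fract r) (to_fract q * to_fract P / to_fract r)"
      by (simp add: delta2_symb_def x)
    moreover have "\<And>u v. u \<in> V \<Longrightarrow> v \<in> V \<Longrightarrow> wedge u v \<in> qspan ?S"
      unfolding V_def using wedge_to_fract_in_wedge2_V by blast
    ultimately show ?thesis
      using wedge_ratio_in_qspan[OF rels _ _ inV] \<open>P \<noteq> 0\<close>
      by (simp add: residue_wedge_def V_def flip: g_def h_def r_def)
  qed
qed

lemma delta2_eq_sum:
  assumes "finite T" "{x. Y x \<noteq> 0} \<subseteq> T"
  shows "delta2 Y = (\<lambda>z. \<Sum>x\<in>T. Y x * delta2_symb x z)"
  unfolding delta2_def using assms by (intro ext sum.mono_neutral_left) auto

lemma delta2_add:
  assumes "finite {x. Y x \<noteq> 0}" "finite {x. Z x \<noteq> 0}"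
  shows "delta2 (Y + Z) = delta2 Y + delta2 Z"
proof -
  let ?T = "{x. Y x \<noteq> 0} \<union> {x. Z x \<noteq> 0}"
  have "finite ?T"
    using assms by simp
  moreover have "{x. (Y + Z) x \<noteq> 0} \<subseteq> ?T"
    by auto
  ultimately show ?thesis
    by (simp add: delta2_eq_sum[of ?T] fun_eq_iff distrib_right sum.distrib)
qed

lemma delta2_uminus: "delta2 (- Y) = - delta2 Y"
  by (simp add: delta2_def fun_eq_iff sum_negf)

lemma delta2_symb: "delta2 (symb x) = delta2_symb (Some x)"
  by (simp add: delta2_eq_sum[of "{Some x}"] symb_def)

lemma finite_support_symb: "finite {z. symb x z \<noteq> 0}"
  by (simp add: symb_def)

lemma finite_support_add:
  fixes Y Z :: "'b \<Rightarrow> rat"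
  shows "finite {x. Y x \<noteq> 0} \<Longrightarrow> finite {x. Z x \<noteq> 0} \<Longrightarrow> finite {x. (Y + Z) x \<noteq> 0}"
  by (rule finite_subset[of _ "{x. Y x \<noteq> 0} \<union> {x. Z x \<noteq> 0}"]) auto

lemma finite_support_uminus:
  fixes Y :: "'b \<Rightarrow> rat"
  shows "finite {x. (- Y) x \<noteq> 0} \<longleftrightarrow> finite {x. Y x \<noteq> 0}"
  by simp

theorem lemma2:
  fixes P G1 G2 G3 :: "'a::field poly"
  assumes "lead_coeff P = 1" and "irreducible P" and "degree P \<ge> 1"
    and "\<not> P dvd G1" and "\<not> P dvd G2" and "\<not> P dvd G3"
  shows "in_B (degree P - 1)
           (vadd (vsub (vsub (symb (xP P G1 G2)) (symb (xP P (G1 * G3) G2)))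
                       (symb (xP P G1 G3)))
                 (symb (xP P (G1 * G2) G3)))"
proof -
  let ?Y = "symb (xP P G1 G2) - symb (xP P (G1 * G3) G2) - symb (xP P G1 G3)
            + symb (xP P (G1 * G2) G3)"
  let ?D = "\<lambda>G H. delta2_symb (Some (xP P G H))"
  let ?c = "residue_wedge P"
  let ?S = "wedge_rels \<union> wedge2_V_gens (degree P - 1)"
  have finite: "finite {x. ?Y x \<noteq> 0}"
    by (simp only: diff_conv_add_uminus finite_support_add finite_support_uminus finite_support_symb)
  have "delta2 ?Y = ?D G1 G2 - ?D (G1 * G3) G2 - ?D G1 G3 + ?D (G1 * G2) G3"
    by (simp only: diff_conv_add_uminus delta2_add delta2_uminus delta2_symb
        finite_support_add finite_support_uminus finite_support_symb)
  also have "\<dots> = (?D G1 G2 - (?c G1 + ?c G2 - ?c (G1 * G2)))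
      - (?D (G1 * G3) G2 - (?c (G1 * G3) + ?c G2 - ?c (G1 * G3 * G2)))
      - (?D G1 G3 - (?c G1 + ?c G3 - ?c (G1 * G3)))
      + (?D (G1 * G2) G3 - (?c (G1 * G2) + ?c G3 - ?c (G1 * G2 * G3)))"
    by (simp add: algebra_simps mult.commute[of G3 G2])
  also have "\<dots> \<in> qspan ?S"
    using assms(2,4-6) prime_elem_dvd_mult_iff[OF field_poly_irreducible_imp_prime[OF assms(2)]]
    by (intro qspan_add qspan_diff delta2_symb_xP_in_wedge2_V) simp_all
  finally have "delta2 ?Y \<in> qspan ?S" .
  with finite show ?thesis
    by (simp add: in_B_def in_wedge2_V_iff vadd_eq_plus vsub_eq_minus)
qed

end
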